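(* Let $q\ge 2$ and let $D$ be a directed graph on $n$ vertices which has an induced acyclic subgraph on $I$ vertices. If $$(n-I)\left(\frac{q}{q-1}\right)^{I} < q,$$ then $D$ is not $q$-solvable.
   Context: A directed graph $D=(V,E)$ has arcs $E \subseteq \{(u,v)\in V^2 : u \neq v\}$ (bidirectional pairs allowed). An induced subgraph is acyclic if it contains no directed cycle. $N^-(v)=\{u:(u,v)\in E\}$. For $q\ge2$ let $[q]=\{0,\dots,q-1\}$. A $D$-function over $[q]$ is a map $f=(f_v)_{v\in V}:[q]^V\to[q]^V$ with each $f_v(x)$ depending only on $(x_u)_{u\in N^-(v)}$. $D$ is $q$-solvable if some $D$-function $f$ over $[q]$ has the property that for every $x\in[q]^V$ there is $v$ with $f_v(x)=x_v$. *)

theory Defs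
  imports "HOL-Analysis.Analysis" "HOL-Library.FuncSet"
begin

definition digraph :: "'v set \<Rightarrow> ('v \<times> 'v) set \<Rightarrow> bool" where
  "digraph V E \<longleftrightarrow> E \<subseteq> {(u, v). u \<in> V \<and> v \<in> V \<and> u \<noteq> v}"

definition in_nbrs :: "('v \<times> 'v) set \<Rightarrow> 'v \<Rightarrow> 'v set" where
  "in_nbrs E v = {u. (u, v) \<in> E}"

definition induced_acyclic :: "'v set \<Rightarrow> ('v \<times> 'v) set \<Rightarrow> 'v set \<Rightarrow> bool" where
  "induced_acyclic V E S \<longleftrightarrow> S \<subseteq> V \<and> acyclic (E \<inter> (S \<times> S))"

text \<open>Configurations x \<in> [q]^V, with [q] = {0..<q}; represented extensionally.\<close>
definition configs :: "'v set \<Rightarrow> nat \<Rightarrow> ('v \<Rightarrow> nat) set" where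
  "configs V q = V \<rightarrow>\<^sub>E {..<q}"

definition D_function :: "'v set \<Rightarrow> ('v \<times> 'v) set \<Rightarrow> nat \<Rightarrow> ('v \<Rightarrow> ('v \<Rightarrow> nat) \<Rightarrow> nat) \<Rightarrow> bool" where
  "D_function V E q f \<longleftrightarrow>
     (\<forall>v\<in>V. \<forall>x\<in>configs V q. f v x \<in> {..<q}) \<and>
     (\<forall>v\<in>V. \<forall>x\<in>configs V q. \<forall>y\<in>configs V q.
        (\<forall>u\<in>in_nbrs E v. x u = y u) \<longrightarrow> f v x = f v y)"

definition q_solvable :: "'v set \<Rightarrow> ('v \<times> 'v) set \<Rightarrow> nat \<Rightarrow> bool" where
  "q_solvable V E q \<longleftrightarrow>
     (\<exists>f. D_function V E q f \<and> (\<forall>x\<in>configs V q. \<exists>v\<in>V. f v x = x v))"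

end

theory Submission
  imports Defs
begin

text \<open>Let f be a D-function and S an acyclic set with |S| = I. Since no loops exist, f_v never
  depends on x_v, so for each v exactly a q-th of all configurations satisfy f_v(x) = x_v.
  Removing a sink s of S one at a time, the coordinate x_s is irrelevant to the conditions at
  the remaining vertices of S, so exactly q^n ((q-1)/q)^I configurations have f_s(x) \<noteq> x_s
  for every s \<in> S. If f solved D, each of them would have f_t(x) = x_t for some t \<notin> S, and
  a union bound gives q^n ((q-1)/q)^I \<le> (n - I) q^(n-1), contradicting the hypothesis.\<close>

definition independent_of_coord :: "'v set \<Rightarrow> nat \<Rightarrow> 'v \<Rightarrow> (('v \<Rightarrow> nat) \<Rightarrow> 'a) \<Rightarrow> bool" where
  "independent_of_coord V q s h \<longleftrightarrow> (\<forall>x\<in>configs V q. \<forall>c<q. h (x(s := c)) = h x)"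

lemma finite_configs: "finite V \<Longrightarrow> finite (configs V q)"
  unfolding configs_def by (simp add: finite_PiE)

lemma card_configs: "finite V \<Longrightarrow> card (configs V q) = q ^ card V"
  unfolding configs_def by (simp add: card_PiE)

lemma configs_upd: "x \<in> configs V q \<Longrightarrow> s \<in> V \<Longrightarrow> c < q \<Longrightarrow> x(s := c) \<in> configs V q"
  unfolding configs_def by (auto simp: PiE_def extensional_def Pi_def)

lemma bij_betw_configs_upd:
  assumes "s \<in> V"
  shows "bij_betw (\<lambda>(y, c). y(s := c)) (configs (V - {s}) q \<times> {..<q}) (configs V q)"
  by (rule bij_betwI[where g = "\<lambda>x. (x(s := undefined), x s)"])
    (use assms in \<open>auto simp: configs_def PiE_def extensional_def Pi_def fun_eq_iff\<close>)

lemma card_configs_fibres: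
  assumes "s \<in> V" "finite V"
  shows "card {x \<in> configs V q. R x} =
    (\<Sum>y\<in>configs (V - {s}) q. card {c \<in> {..<q}. R (y(s := c))})"
proof -
  let ?h = "\<lambda>(y, c). y(s := c)"
  let ?A = "configs (V - {s}) q \<times> {..<q}"
  have bij: "bij_betw ?h ?A (configs V q)"
    using assms(1) by (rule bij_betw_configs_upd)
  then have "bij_betw ?h {p \<in> ?A. R (?h p)} {x \<in> configs V q. R x}"
    by (rule bij_betw_Collect) simp
  then have "card {x \<in> configs V q. R x} = card {p \<in> ?A. R (?h p)}"
    by (simp add: bij_betw_same_card)
  also have "{p \<in> ?A. R (?h p)} = (SIGMA y:configs (V - {s}) q. {c \<in> {..<q}. R (y(s := c))})"
    by auto
  also have "card \<dots> = (\<Sum>y\<in>configs (V - {s}) q. card {c \<in> {..<q}. R (y(s := c))})"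
    using assms(2) by (simp add: finite_configs)
  finally show ?thesis .
qed

lemma card_fixed_coord:
  assumes "s \<in> V" "finite V" "0 < q"
    and "independent_of_coord V q s P" "independent_of_coord V q s g"
    and "\<And>x. x \<in> configs V q \<Longrightarrow> g x < q"
  shows "card {x \<in> configs V q. P x \<and> g x = x s} * q = card {x \<in> configs V q. P x}"
proof -
  have fixed: "card {c \<in> {..<q}. P (y(s := c)) \<and> g (y(s := c)) = c} * q =
      card {c \<in> {..<q}. P (y(s := c))}" if y: "y \<in> configs (V - {s}) q" for y
  proof -
    define x0 where "x0 = y(s := 0)"
    have x0: "x0 \<in> configs V q"
      using bij_betw_apply[OF bij_betw_configs_upd[OF assms(1)], of "(y, 0)"] y assms(3)
      by (simp add: x0_def)
    have upd: "P (y(s := c)) = P x0" "g (y(s := c)) = g x0" if "c < q" for c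
    proof -
      have "y(s := c) = x0(s := c)" by (simp add: x0_def)
      then show "P (y(s := c)) = P x0" "g (y(s := c)) = g x0"
        using assms(4,5) x0 that unfolding independent_of_coord_def by simp_all
    qed
    show ?thesis
    proof (cases "P x0")
      case True
      have "g x0 < q" using assms(6) x0 .
      then have "{c \<in> {..<q}. P (y(s := c)) \<and> g (y(s := c)) = c} = {g x0}"
        using True upd by auto
      moreover have "{c \<in> {..<q}. P (y(s := c))} = {..<q}"
        using True upd by auto
      ultimately show ?thesis by simp
    next
      case False
      then have "{c \<in> {..<q}. P (y(s := c)) \<and> g (y(s := c)) = c} = {}"
          "{c \<in> {..<q}. P (y(s := c))} = {}"
        using upd by auto
      then show ?thesis by (metis card.empty mult_0)
    qed
  qed
  show ?thesis
    unfolding card_configs_fibres[OF assms(1,2)] sum_distrib_right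
    using fixed by (intro sum.cong) auto
qed

lemma card_nonfixed_coord:
  assumes "s \<in> V" "finite V" "0 < q"
    and "independent_of_coord V q s P" "independent_of_coord V q s g"
    and "\<And>x. x \<in> configs V q \<Longrightarrow> g x < q"
  shows "card {x \<in> configs V q. P x \<and> g x \<noteq> x s} * q = card {x \<in> configs V q. P x} * (q - 1)"
proof -
  let ?P = "{x \<in> configs V q. P x}" and ?F = "{x \<in> configs V q. P x \<and> g x = x s}"
  have "{x \<in> configs V q. P x \<and> g x \<noteq> x s} = ?P - ?F" by auto
  moreover have "card (?P - ?F) = card ?P - card ?F"
    using assms(2) by (intro card_Diff_subset) (auto intro: finite_subset[OF _ finite_configs])
  ultimately show ?thesis
    using card_fixed_coord[OF assms] by (simp add: diff_mult_distrib right_diff_distrib')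
qed

lemma D_function_less:
  "D_function V E q f \<Longrightarrow> v \<in> V \<Longrightarrow> x \<in> configs V q \<Longrightarrow> f v x < q"
  unfolding D_function_def by blast

lemma D_function_independent_of_coord:
  assumes "D_function V E q f" "v \<in> V" "w \<in> V" "w \<notin> in_nbrs E v"
  shows "independent_of_coord V q w (f v)"
  unfolding independent_of_coord_def
proof (intro ballI allI impI)
  fix x c assume x: "x \<in> configs V q" and "c < q"
  have depends_on_in_nbrs: "f v y = f v z"
    if "y \<in> configs V q" "z \<in> configs V q" "\<forall>u\<in>in_nbrs E v. y u = z u" for y z
    using assms(1,2) that unfolding D_function_def by blast
  show "f v (x(w := c)) = f v x"
    using assms(4) by (intro depends_on_in_nbrs configs_upd[OF x assms(3) \<open>c < q\<close>] x) auto
qed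

lemma digraph_not_in_nbrs_self: "digraph V E \<Longrightarrow> v \<notin> in_nbrs E v"
  unfolding digraph_def in_nbrs_def by auto

lemma induced_acyclic_subset:
  assumes "induced_acyclic V E S" "T \<subseteq> S"
  shows "induced_acyclic V E T"
proof -
  have "E \<inter> T \<times> T \<subseteq> E \<inter> S \<times> S" using assms(2) by auto
  then show ?thesis
    using assms unfolding induced_acyclic_def by (auto intro: acyclic_subset)
qed

lemma acyclic_finite_has_sink:
  assumes "finite S" "S \<noteq> {}" "acyclic (E \<inter> S \<times> S)"
  shows "\<exists>s\<in>S. \<forall>y\<in>S. (s, y) \<notin> E"
proof -
  have "finite (E \<inter> S \<times> S)" using assms(1) by auto
  then have "wf ((E \<inter> S \<times> S)\<inverse>)"
    using assms(3) by (rule finite_acyclic_wf_converse)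
  then obtain s where "s \<in> S" "\<And>y. (y, s) \<in> (E \<inter> S \<times> S)\<inverse> \<Longrightarrow> y \<notin> S"
    using assms(2) by (rule wfE_min') blast
  then show ?thesis by blast
qed

lemma card_configs_no_fixed_point_on_acyclic:
  assumes f: "D_function V E q f" and "finite V" "digraph V E" "0 < q"
    and "induced_acyclic V E S"
  shows "card {x \<in> configs V q. \<forall>s\<in>S. f s x \<noteq> x s} * q ^ card S =
    q ^ card V * (q - 1) ^ card S"
  using assms(5)
proof (induction "card S" arbitrary: S)
  case 0
  then have "finite S"
    using \<open>finite V\<close> unfolding induced_acyclic_def by (blast intro: finite_subset)
  with 0 have "S = {}" by simp
  then show ?case using card_configs[OF \<open>finite V\<close>] by simp
next
  case (Suc k)
  have SV: "S \<subseteq> V" and acyc: "acyclic (E \<inter> S \<times> S)"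
    using Suc.prems unfolding induced_acyclic_def by auto
  have "finite S" using SV \<open>finite V\<close> by (rule finite_subset)
  moreover have "S \<noteq> {}" using Suc.hyps(2) by auto
  ultimately obtain s where "s \<in> S" and sink: "\<And>y. y \<in> S \<Longrightarrow> (s, y) \<notin> E"
    using acyclic_finite_has_sink[OF _ _ acyc] by blast
  define P where "P x \<longleftrightarrow> (\<forall>s'\<in>S - {s}. f s' x \<noteq> x s')" for x
  have "k = card (S - {s})" using Suc.hyps(2) \<open>s \<in> S\<close> \<open>finite S\<close> by simp
  from Suc.hyps(1)[OF this induced_acyclic_subset[OF Suc.prems Diff_subset]]
  have IH: "card {x \<in> configs V q. P x} * q ^ k = q ^ card V * (q - 1) ^ k"
    unfolding P_def by (simp add: \<open>k = card (S - {s})\<close>)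
  have "s \<in> V" using \<open>s \<in> S\<close> SV by blast
  have "independent_of_coord V q s (f s')" if "s' \<in> S - {s}" for s'
    using D_function_independent_of_coord[OF f _ \<open>s \<in> V\<close>, of s'] sink[of s'] that SV
    unfolding in_nbrs_def by blast
  then have "independent_of_coord V q s P"
    unfolding independent_of_coord_def P_def by auto
  moreover have "independent_of_coord V q s (f s)"
    using D_function_independent_of_coord[OF f \<open>s \<in> V\<close> \<open>s \<in> V\<close>]
      digraph_not_in_nbrs_self[OF \<open>digraph V E\<close>] .
  ultimately have step: "card {x \<in> configs V q. P x \<and> f s x \<noteq> x s} * q =
      card {x \<in> configs V q. P x} * (q - 1)"
    by (rule card_nonfixed_coord[OF \<open>s \<in> V\<close> \<open>finite V\<close> \<open>0 < q\<close> _ _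
          D_function_less[OF f \<open>s \<in> V\<close>]])
  have "{x \<in> configs V q. \<forall>s\<in>S. f s x \<noteq> x s} = {x \<in> configs V q. P x \<and> f s x \<noteq> x s}"
    using \<open>s \<in> S\<close> unfolding P_def by auto
  then have "card {x \<in> configs V q. \<forall>s\<in>S. f s x \<noteq> x s} * q ^ card S =
      card {x \<in> configs V q. P x \<and> f s x \<noteq> x s} * q * q ^ k"
    by (simp add: Suc.hyps(2)[symmetric])
  also have "\<dots> = card {x \<in> configs V q. P x} * (q - 1) * q ^ k"
    by (simp only: step)
  also have "\<dots> = card {x \<in> configs V q. P x} * q ^ k * (q - 1)"
    by (simp only: mult_ac)
  also have "\<dots> = q ^ card V * (q - 1) ^ card S"
    by (simp add: IH Suc.hyps(2)[symmetric])
  finally show ?case .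
qed

lemma card_fixed_points:
  assumes f: "D_function V E q f" and "finite V" "digraph V E" "0 < q" "t \<in> V"
  shows "card {x \<in> configs V q. f t x = x t} * q = q ^ card V"
proof -
  have "independent_of_coord V q t (f t)"
    using D_function_independent_of_coord[OF f \<open>t \<in> V\<close> \<open>t \<in> V\<close>]
      digraph_not_in_nbrs_self[OF \<open>digraph V E\<close>] .
  moreover have "independent_of_coord V q t (\<lambda>_. True)"
    unfolding independent_of_coord_def by simp
  moreover have "\<And>x. x \<in> configs V q \<Longrightarrow> f t x < q"
    using D_function_less[OF f \<open>t \<in> V\<close>] .
  ultimately show ?thesis
    using card_fixed_coord[OF \<open>t \<in> V\<close> \<open>finite V\<close> \<open>0 < q\<close>, of "\<lambda>_. True" "f t"]
      card_configs[OF \<open>finite V\<close>] by simp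
qed

lemma q_solvable_card_bound:
  assumes "q_solvable V E q" "finite V" "digraph V E" "induced_acyclic V E S" "0 < q"
  shows "(q - 1) ^ card S * q \<le> card (V - S) * q ^ card S"
proof -
  obtain f where f: "D_function V E q f" and sol: "\<forall>x\<in>configs V q. \<exists>v\<in>V. f v x = x v"
    using assms(1) unfolding q_solvable_def by blast
  let ?A = "{x \<in> configs V q. \<forall>s\<in>S. f s x \<noteq> x s}"
  let ?F = "\<lambda>t. {x \<in> configs V q. f t x = x t}"
  have "?A \<subseteq> (\<Union>t\<in>V - S. ?F t)" using sol by blast
  then have "card ?A \<le> card (\<Union>t\<in>V - S. ?F t)"
    using assms(2) by (intro card_mono) (auto simp: finite_configs)
  also have "\<dots> \<le> (\<Sum>t\<in>V - S. card (?F t))"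
    by (rule card_UN_le) (use assms(2) in simp)
  finally have "card ?A * q \<le> (\<Sum>t\<in>V - S. card (?F t) * q)"
    unfolding sum_distrib_right[symmetric] by (rule mult_le_mono1)
  also have "\<dots> = card (V - S) * q ^ card V"
    using card_fixed_points[OF f assms(2,3,5)] by simp
  finally have bound: "card ?A * q \<le> card (V - S) * q ^ card V" .
  have "q ^ card V * ((q - 1) ^ card S * q) = q ^ card V * (q - 1) ^ card S * q"
    by (rule mult.assoc[symmetric])
  also have "\<dots> = card ?A * q ^ card S * q"
    by (simp only: card_configs_no_fixed_point_on_acyclic[OF f assms(2,3,5,4)])
  also have "\<dots> = card ?A * q * q ^ card S"
    by (simp only: mult_ac)
  also have "\<dots> \<le> card (V - S) * q ^ card V * q ^ card S"
    using bound by (rule mult_le_mono1)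
  also have "\<dots> = q ^ card V * (card (V - S) * q ^ card S)"
    by (simp only: mult_ac)
  finally show ?thesis using assms(5) by simp
qed

theorem theorem13:
  fixes V :: "'v set" and E :: "('v \<times> 'v) set" and S :: "'v set" and q :: nat
  assumes "q \<ge> 2"
    and "finite V"
    and "digraph V E"
    and "induced_acyclic V E S"
    and "(real (card V) - real (card S)) * (real q / (real q - 1)) ^ card S < real q"
  shows "\<not> q_solvable V E q"
proof
  assume "q_solvable V E q"
  then have "(q - 1) ^ card S * q \<le> card (V - S) * q ^ card S"
    using assms(1) by (intro q_solvable_card_bound[OF _ assms(2-4)]) simp_all
  then have "real ((q - 1) ^ card S * q) \<le> real (card (V - S) * q ^ card S)"
    by (simp only: of_nat_le_iff)
  moreover have "real (q - 1) = real q - 1" using assms(1) by (simp add: of_nat_diff)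
  ultimately have "(real q - 1) ^ card S * real q \<le> real (card (V - S)) * real q ^ card S"
    by (simp only: of_nat_mult of_nat_power)
  moreover have "real (card (V - S)) = real (card V) - real (card S)"
  proof -
    have "S \<subseteq> V" using assms(4) unfolding induced_acyclic_def by simp
    moreover have "finite S" using calculation assms(2) by (rule finite_subset)
    ultimately show ?thesis using assms(2) by (simp add: card_Diff_subset card_mono of_nat_diff)
  qed
  moreover have "(real q - 1) ^ card S > 0" using assms(1) by simp
  ultimately have "real q \<le> (real (card V) - real (card S)) * (real q / (real q - 1)) ^ card S"
    by (simp add: power_divide le_divide_eq mult.commute)
  with assms(5) show False by simp
qed

end
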